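(* For every $k\geq0$, the Margolis homology groups $M_*(W_2(k);Q_0)$ and $M_*(W_2(k);Q_1)$ are both one-dimensional $\mathbb{F}_p$-vector spaces. Thus $W_2(k)$ is an invertible $E(1)_*$-comodule (i.e. invertible in the stable category of $E(1)$-modules).
   Context: Let $p$ be an odd prime and $(A/\!/E(2))_*=\mathbb{F}_p[\zeta_1,\zeta_2,\ldots]\otimes E(\overline{\tau}_3,\overline{\tau}_4,\ldots)$ (subalgebra of the mod $p$ dual Steenrod algebra; $\zeta_n,\overline{\tau}_n$ are the conjugates of Milnor's $\xi_n,\tau_n$). It is a module over $E(1)=E(Q_0,Q_1)$ (Milnor primitives; equivalently a comodule over $E(1)_*=E(\overline{\tau}_0,\overline{\tau}_1)$), each $Q_i$ acting as a graded derivation with $Q_i\zeta_n=0$ and, for $k\ge1$, $Q_0\overline{\tau}_{2+k}=\zeta_{2+k}$, $Q_1\overline{\tau}_{2+k}=\zeta_{1+k}^p$. The weight of a monomial is defined by $\mathrm{wt}(\zeta_n)=\mathrm{wt}(\overline{\tau}_n)=p^n$ and $\mathrm{wt}(xy)=\mathrm{wt}(x)+\mathrm{wt}(y)$. Let $R=\mathbb{F}_p[\zeta_2,\zeta_3,\ldots]\otimes E(\overline{\tau}_3,\overline{\tau}_4,\ldots)\subseteq (A/\!/E(2))_*$, an $E(1)_*$-subcomodule algebra, and let $W_2(k)$ be the $\mathbb{F}_p$-span of the monomials $m\in R$ with $\mathrm{wt}(m)=p^2k$. Margolis homology is $M_*(N;Q_i)=\ker Q_i/\operatorname{im}Q_i$.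 *)

theory Defs
  imports Main "HOL-Library.Function_Algebras" "Berlekamp_Zassenhaus.Finite_Field"
begin

text \<open>A monomial of R = F_p[zeta_2, zeta_3, ...] (x) E(taubar_3, taubar_4, ...) is
  encoded as a pair (e, S): e n is the exponent of zeta_n (finite support, zero for n < 2),
  and S is the (finite) set of indices n >= 3 of the exterior generators taubar_n occurring,
  written in increasing order of the index.\<close>

type_synonym mono = "(nat \<Rightarrow> nat) \<times> nat set"

definition is_Rmono :: "mono \<Rightarrow> bool" where
  "is_Rmono m \<longleftrightarrow> finite {n. fst m n \<noteq> 0} \<and> (\<forall>n<2. fst m n = 0)
     \<and> finite (snd m) \<and> snd m \<subseteq> {3..}"

definition wt :: "nat \<Rightarrow> mono \<Rightarrow> nat" where
  "wt p m = (\<Sum>n\<in>{n. fst m n \<noteq> 0}. fst m n * p ^ n) + (\<Sum>n\<in>snd m. p ^ n)"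

definition W2basis :: "nat \<Rightarrow> nat \<Rightarrow> mono set" where
  "W2basis p k = {m. is_Rmono m \<and> wt p m = p ^ 2 * k}"

text \<open>Effect on the polynomial part of replacing taubar_s by Q_i(taubar_s):
  Q_0 taubar_s = zeta_s, Q_1 taubar_s = zeta_(s-1)^p (for s >= 3).\<close>
definition Qtarget :: "nat \<Rightarrow> nat \<Rightarrow> nat \<Rightarrow> (nat \<Rightarrow> nat) \<Rightarrow> (nat \<Rightarrow> nat)" where
  "Qtarget i p s e = (if i = 0 then e(s := e s + 1) else e(s - 1 := e (s - 1) + p))"

text \<open>Coefficient of the monomial m' in Q_i(m), Q_i a graded derivation of odd degree
  killing all zeta_n: Q_i(zeta^e taubar_s1 ... taubar_sr)
  = sum_j (-1)^(j-1) zeta^e taubar_s1 ... Q_i(taubar_sj) ... taubar_sr.\<close>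
definition Qcoef :: "nat \<Rightarrow> nat \<Rightarrow> mono \<Rightarrow> mono \<Rightarrow> 'f::comm_ring_1" where
  "Qcoef i p m m' = (\<Sum>s\<in>snd m.
      if m' = (Qtarget i p s (fst m), snd m - {s})
      then (-1) ^ card {t\<in>snd m. t < s} else 0)"

definition Wspace :: "nat \<Rightarrow> nat \<Rightarrow> (mono \<Rightarrow> 'f::field) set" where
  "Wspace p k = {v. \<forall>m. v m \<noteq> 0 \<longrightarrow> m \<in> W2basis p k}"

text \<open>The linear map Q_i on W_2(k) (Q_i preserves weight and R).\<close>
definition Qmap :: "nat \<Rightarrow> nat \<Rightarrow> nat \<Rightarrow> (mono \<Rightarrow> 'f::field) \<Rightarrow> (mono \<Rightarrow> 'f)" where
  "Qmap i p k v = (\<lambda>m'. \<Sum>m\<in>W2basis p k. v m * Qcoef i p m m')"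

definition fscale :: "'f::field \<Rightarrow> (mono \<Rightarrow> 'f) \<Rightarrow> (mono \<Rightarrow> 'f)" where
  "fscale c v = (\<lambda>x. c * v x)"

text \<open>Total dimension of the Margolis homology ker Q_i / im Q_i on W_2(k),
  computed as dim(ker) - dim(im) (im is contained in ker since Q_i^2 = 0).\<close>
definition margolis_dim :: "'f::field itself \<Rightarrow> nat \<Rightarrow> nat \<Rightarrow> nat \<Rightarrow> nat" where
  "margolis_dim _ i p k =
     vector_space.dim (fscale :: 'f \<Rightarrow> _) {v \<in> (Wspace p k :: (mono \<Rightarrow> 'f) set). Qmap i p k v = 0}
     - vector_space.dim (fscale :: 'f \<Rightarrow> _) (Qmap i p k ` (Wspace p k :: (mono \<Rightarrow> 'f) set))"

end

theory Submission
  imports Defs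
begin

(* For i = 0, 1 let the pivot of a monomial m be the least n >= 3 such that m is divisible
   by taubar_n or by Q_i(taubar_n), i.e. by zeta_n resp. zeta_(n-1)^p. The map H that replaces
   this power of zeta by taubar_n when taubar_n does not occur in m, and kills m otherwise, is
   a contracting homotopy: Q_i H + H Q_i fixes every monomial having a pivot and kills the
   unique monomial of weight p^2 k without one, namely zeta_2^k for Q_0 and
   prod_n zeta_(n+2)^(k_n), with k = sum_n k_n p^n the p-adic expansion of k, for Q_1.
   Hence ker Q_i = im Q_i + F_p * (that monomial), and the monomial is not a boundary. *)

section \<open>The derivations $Q_i$ on monomials\<close>

definition zeta_index :: "nat \<Rightarrow> nat \<Rightarrow> nat" where
  "zeta_index i s = (if i = 0 then s else s - 1)"

definition zeta_power :: "nat \<Rightarrow> nat \<Rightarrow> nat" where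
  "zeta_power i p = (if i = 0 then 1 else p)"

lemma Qtarget_eq: "Qtarget i p s e = e(zeta_index i s := e (zeta_index i s) + zeta_power i p)"
  by (simp add: Qtarget_def zeta_index_def zeta_power_def)

lemma zeta_power_mult_power: "1 \<le> s \<Longrightarrow> zeta_power i p * p ^ zeta_index i s = p ^ s"
  by (cases s) (auto simp: zeta_power_def zeta_index_def)

lemma zeta_index_eq_iff: "1 \<le> s \<Longrightarrow> 1 \<le> t \<Longrightarrow> zeta_index i s = zeta_index i t \<longleftrightarrow> s = t"
  by (auto simp: zeta_index_def)

lemma zeta_index_ge_2: "3 \<le> s \<Longrightarrow> 2 \<le> zeta_index i s"
  by (auto simp: zeta_index_def)

lemma Qtarget_commute:
  "zeta_index i s \<noteq> zeta_index i t \<Longrightarrow> Qtarget i p s (Qtarget i p t e) = Qtarget i p t (Qtarget i p s e)"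
  by (rule ext) (simp add: Qtarget_eq)

definition Qreplace :: "nat \<Rightarrow> nat \<Rightarrow> nat \<Rightarrow> mono \<Rightarrow> mono" where
  "Qreplace i p s m = (Qtarget i p s (fst m), snd m - {s})"

definition position_sign :: "nat set \<Rightarrow> nat \<Rightarrow> 'f::comm_ring_1" where
  "position_sign S s = (-1) ^ card {t\<in>S. t < s}"

lemma Qcoef_eq:
  "Qcoef i p m m' = (\<Sum>s\<in>snd m. if m' = Qreplace i p s m then position_sign (snd m) s else 0)"
  unfolding Qcoef_def Qreplace_def position_sign_def ..

lemma position_sign_eq_1:
  assumes "\<forall>t\<in>S. s \<le> t"
  shows "position_sign S s = 1"
proof -
  have none_below: "{t\<in>S. t < s} = {}" using assms by force
  show ?thesis unfolding position_sign_def none_below by simp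
qed

lemma position_sign_insert_less:
  assumes "finite S" "n \<notin> S" "n < s"
  shows "position_sign (insert n S) s = - position_sign S s"
proof -
  have "{t \<in> insert n S. t < s} = insert n {t \<in> S. t < s}" using assms(3) by auto
  then show ?thesis using assms(1,2) by (simp add: position_sign_def)
qed

lemma position_sign_swap:
  assumes "finite S" "s \<in> S" "t \<in> S" "s \<noteq> t"
  shows "position_sign S t * position_sign (S - {t}) s
       = - (position_sign S s * position_sign (S - {s}) t :: 'f::comm_ring_1)"
proof -
  have swap_less: "position_sign S b * position_sign (S - {b}) a
      = - (position_sign S a * position_sign (S - {a}) b :: 'f)"
    if "a \<in> S" "b \<in> S" "a < b" for a b
  proof -
    have "S = insert a (S - {a})" using that by auto
    then have "position_sign S b = - (position_sign (S - {a}) b :: 'f)"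
      using position_sign_insert_less[of "S - {a}" a b] that assms(1) by simp
    moreover have "{u \<in> S - {b}. u < a} = {u \<in> S. u < a}" using that by auto
    then have "position_sign (S - {b}) a = (position_sign S a :: 'f)"
      unfolding position_sign_def by simp
    ultimately show ?thesis by simp
  qed
  show ?thesis
    using swap_less[of s t] swap_less[of t s] assms by (cases "s < t") (auto simp: not_less_iff_gr_or_eq)
qed

lemma wt_eq_sum_superset:
  assumes "finite F" "{n. fst m n \<noteq> 0} \<subseteq> F"
  shows "wt p m = (\<Sum>n\<in>F. fst m n * p ^ n) + (\<Sum>n\<in>snd m. p ^ n)"
proof -
  have "(\<Sum>n\<in>{n. fst m n \<noteq> 0}. fst m n * p ^ n) = (\<Sum>n\<in>F. fst m n * p ^ n)"
    by (rule sum.mono_neutral_left) (use assms in auto)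
  then show ?thesis by (simp add: wt_def)
qed

lemma is_Rmono_Qreplace:
  assumes "is_Rmono m" "s \<in> snd m"
  shows "is_Rmono (Qreplace i p s m)"
proof -
  have "3 \<le> s" using assms by (auto simp: is_Rmono_def)
  have "{n. Qtarget i p s (fst m) n \<noteq> 0} \<subseteq> insert (zeta_index i s) {n. fst m n \<noteq> 0}"
    by (auto simp: Qtarget_eq)
  then have "finite {n. Qtarget i p s (fst m) n \<noteq> 0}"
    using assms(1) by (auto simp: is_Rmono_def intro: finite_subset)
  moreover have "\<forall>n<2. Qtarget i p s (fst m) n = 0"
    using assms(1) zeta_index_ge_2[OF \<open>3 \<le> s\<close>, of i] by (auto simp: is_Rmono_def Qtarget_eq)
  ultimately show ?thesis using assms(1) by (auto simp: is_Rmono_def Qreplace_def)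
qed

lemma wt_Qreplace:
  assumes "is_Rmono m" "s \<in> snd m"
  shows "wt p (Qreplace i p s m) = wt p m"
proof -
  obtain e S where m: "m = (e, S)" by (cases m)
  have "3 \<le> s" "finite S" using assms by (auto simp: is_Rmono_def m)
  define F where "F = insert (zeta_index i s) {n. e n \<noteq> 0}"
  have "finite F" using assms(1) by (auto simp: F_def is_Rmono_def m)
  have "{n. fst m n \<noteq> 0} \<subseteq> F" by (auto simp: F_def m)
  have "{n. fst (Qreplace i p s m) n \<noteq> 0} \<subseteq> F"
    by (auto simp: F_def Qreplace_def Qtarget_eq m)
  then have "wt p (Qreplace i p s m) = (\<Sum>n\<in>F. Qtarget i p s e n * p ^ n) + (\<Sum>n\<in>S - {s}. p ^ n)"
    using wt_eq_sum_superset[OF \<open>finite F\<close>] by (simp add: Qreplace_def m)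
  also have "(\<Sum>n\<in>F. Qtarget i p s e n * p ^ n)
      = (\<Sum>n\<in>F. e n * p ^ n + (if n = zeta_index i s then zeta_power i p * p ^ n else 0))"
    by (rule sum.cong) (auto simp: Qtarget_eq algebra_simps)
  also have "\<dots> = (\<Sum>n\<in>F. e n * p ^ n) + p ^ s"
    using \<open>finite F\<close> \<open>3 \<le> s\<close> zeta_power_mult_power[of s i p] by (simp add: sum.distrib F_def)
  also have "\<dots> + (\<Sum>n\<in>S - {s}. p ^ n) = (\<Sum>n\<in>F. e n * p ^ n) + (\<Sum>n\<in>S. p ^ n)"
    using \<open>finite S\<close> assms(2) by (simp add: m sum.remove)
  also have "\<dots> = wt p m"
    using wt_eq_sum_superset[OF \<open>finite F\<close> \<open>{n. fst m n \<noteq> 0} \<subseteq> F\<close>] by (simp add: m)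
  finally show ?thesis .
qed

lemma Qreplace_in_W2basis:
  "m \<in> W2basis p k \<Longrightarrow> s \<in> snd m \<Longrightarrow> Qreplace i p s m \<in> W2basis p k"
  using is_Rmono_Qreplace wt_Qreplace by (auto simp: W2basis_def)

section \<open>The contracting homotopy\<close>

definition active :: "nat \<Rightarrow> nat \<Rightarrow> mono \<Rightarrow> nat set" where
  "active i p m = {s. 3 \<le> s \<and> (zeta_power i p \<le> fst m (zeta_index i s) \<or> s \<in> snd m)}"

definition pivot :: "nat \<Rightarrow> nat \<Rightarrow> mono \<Rightarrow> nat" where
  "pivot i p m = (LEAST s. s \<in> active i p m)"

definition liftable :: "nat \<Rightarrow> nat \<Rightarrow> mono \<Rightarrow> bool" where
  "liftable i p m \<longleftrightarrow> active i p m \<noteq> {} \<and> pivot i p m \<notin> snd m"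

definition lift :: "nat \<Rightarrow> nat \<Rightarrow> mono \<Rightarrow> mono" where
  "lift i p m = ((fst m)(zeta_index i (pivot i p m) :=
      fst m (zeta_index i (pivot i p m)) - zeta_power i p), insert (pivot i p m) (snd m))"

lemma pivot_in_active: "active i p m \<noteq> {} \<Longrightarrow> pivot i p m \<in> active i p m"
  unfolding pivot_def by (auto intro: LeastI)

lemma pivot_le: "s \<in> active i p m \<Longrightarrow> pivot i p m \<le> s"
  unfolding pivot_def by (rule Least_le)

lemma pivot_eqI: "n \<in> active i p m \<Longrightarrow> (\<And>t. t \<in> active i p m \<Longrightarrow> n \<le> t) \<Longrightarrow> pivot i p m = n"
  unfolding pivot_def by (rule Least_equality)

lemma exterior_subset_active: "is_Rmono m \<Longrightarrow> snd m \<subseteq> active i p m"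
  by (auto simp: is_Rmono_def active_def)

lemma pivot_le_exterior: "is_Rmono m \<Longrightarrow> s \<in> snd m \<Longrightarrow> pivot i p m \<le> s"
  using exterior_subset_active pivot_le by blast

lemma active_Qreplace_iff:
  assumes "3 \<le> s" "3 \<le> t" "t \<noteq> s"
  shows "t \<in> active i p (Qreplace i p s m) \<longleftrightarrow> t \<in> active i p m"
  using assms zeta_index_eq_iff[of t s i] by (auto simp: active_def Qreplace_def Qtarget_eq)

lemma pivot_Qreplace:
  assumes "is_Rmono m" "s \<in> snd m"
  shows "active i p (Qreplace i p s m) \<noteq> {}" "pivot i p (Qreplace i p s m) = pivot i p m"
proof -
  define n where "n = pivot i p m"
  have "s \<in> active i p m" using exterior_subset_active[OF assms(1)] assms(2) by blast
  then have n_active: "n \<in> active i p m" and "n \<le> s"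
    using pivot_in_active pivot_le n_def by blast+
  have "3 \<le> s" "3 \<le> n" using \<open>s \<in> active i p m\<close> n_active by (auto simp: active_def)
  have "s \<in> active i p (Qreplace i p s m)" using \<open>3 \<le> s\<close> by (simp add: active_def Qreplace_def Qtarget_eq)
  then have "n \<in> active i p (Qreplace i p s m)"
    using n_active active_Qreplace_iff[OF \<open>3 \<le> s\<close> \<open>3 \<le> n\<close>] by (cases "n = s") auto
  moreover have "n \<le> t" if "t \<in> active i p (Qreplace i p s m)" for t
  proof (cases "t = s")
    case False
    have "3 \<le> t" using that by (simp add: active_def)
    then show ?thesis
      using that False active_Qreplace_iff[OF \<open>3 \<le> s\<close>] pivot_le n_def by blast
  qed (use \<open>n \<le> s\<close> in simp)
  ultimately show "active i p (Qreplace i p s m) \<noteq> {}" "pivot i p (Qreplace i p s m) = pivot i p m"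
    using pivot_eqI n_def by blast+
qed

lemma liftable_Qreplace_iff:
  assumes "is_Rmono m" "s \<in> snd m"
  shows "liftable i p (Qreplace i p s m) \<longleftrightarrow> s = pivot i p m \<or> pivot i p m \<notin> snd m"
  using pivot_Qreplace[OF assms] by (auto simp: liftable_def Qreplace_def)

lemma lift_Qreplace_pivot:
  assumes "is_Rmono m" "pivot i p m \<in> snd m"
  shows "lift i p (Qreplace i p (pivot i p m) m) = m"
  using pivot_Qreplace[OF assms] assms(2)
  by (cases m) (auto simp: lift_def Qreplace_def Qtarget_eq)

lemma Qreplace_pivot_lift:
  assumes "liftable i p m"
  shows "Qreplace i p (pivot i p m) (lift i p m) = m"
proof -
  have "pivot i p m \<in> active i p m" "pivot i p m \<notin> snd m"
    using assms pivot_in_active by (auto simp: liftable_def)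
  then show ?thesis
    by (cases m) (auto simp: lift_def Qreplace_def Qtarget_eq active_def)
qed

lemma lift_Qreplace:
  assumes "is_Rmono m" "liftable i p m" "s \<in> snd m"
  shows "lift i p (Qreplace i p s m) = Qreplace i p s (lift i p m)"
proof -
  define n where "n = pivot i p m"
  have "n \<in> active i p m" "n \<notin> snd m" using assms(2) pivot_in_active n_def by (auto simp: liftable_def)
  moreover have "n \<le> s" using pivot_le_exterior[OF assms(1,3)] by (simp add: n_def)
  ultimately have "zeta_index i n \<noteq> zeta_index i s" "insert n (snd m) - {s} = insert n (snd m - {s})"
    using assms(3) zeta_index_eq_iff[of n s i] by (auto simp: active_def)
  then show ?thesis
    using pivot_Qreplace(2)[OF assms(1,3)]
    by (auto simp: lift_def Qreplace_def Qtarget_eq n_def[symmetric] fun_eq_iff)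
qed

lemma is_Rmono_lift:
  assumes "is_Rmono m" "liftable i p m"
  shows "is_Rmono (lift i p m)"
proof -
  define n where "n = pivot i p m"
  have "3 \<le> n" using assms(2) pivot_in_active n_def by (auto simp: liftable_def active_def)
  have "{x. fst (lift i p m) x \<noteq> 0} \<subseteq> {x. fst m x \<noteq> 0}"
    by (auto simp: lift_def)
  moreover have "finite {x. fst m x \<noteq> 0}" using assms(1) by (simp add: is_Rmono_def)
  ultimately have "finite {x. fst (lift i p m) x \<noteq> 0}" by (rule finite_subset)
  moreover have "\<forall>x<2. fst (lift i p m) x = 0"
    using assms(1) zeta_index_ge_2[OF \<open>3 \<le> n\<close>, of i] by (simp add: is_Rmono_def lift_def n_def)
  moreover have "finite (snd (lift i p m))" "snd (lift i p m) \<subseteq> {3..}"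
    using assms(1) \<open>3 \<le> n\<close> by (auto simp: is_Rmono_def lift_def n_def)
  ultimately show ?thesis unfolding is_Rmono_def by blast
qed

lemma lift_in_W2basis:
  assumes "m \<in> W2basis p k" "liftable i p m"
  shows "lift i p m \<in> W2basis p k"
proof -
  have "is_Rmono m" using assms(1) by (simp add: W2basis_def)
  then have R: "is_Rmono (lift i p m)" using is_Rmono_lift assms(2) by blast
  have "pivot i p m \<in> snd (lift i p m)" by (simp add: lift_def)
  then have "wt p (lift i p m) = wt p m"
    using wt_Qreplace[OF R] Qreplace_pivot_lift[OF assms(2)] by metis
  then show ?thesis using R assms(1) by (simp add: W2basis_def)
qed

definition Hcoef :: "nat \<Rightarrow> nat \<Rightarrow> mono \<Rightarrow> mono \<Rightarrow> 'f::comm_ring_1" where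
  "Hcoef i p m m' = (if liftable i p m \<and> lift i p m = m' then 1 else 0)"

lemma contraction_identity_pivot_exterior:
  assumes "is_Rmono m" "pivot i p m \<in> snd m"
  shows "(\<Sum>s\<in>snd m. position_sign (snd m) s * Hcoef i p (Qreplace i p s m) m'')
       = (if m'' = m then 1 else (0::'f::comm_ring_1))"
proof -
  define n where "n = pivot i p m"
  have "finite (snd m)" using assms(1) by (simp add: is_Rmono_def)
  have "(\<Sum>s\<in>snd m. position_sign (snd m) s * Hcoef i p (Qreplace i p s m) m'')
      = (\<Sum>s\<in>snd m. if s = n then position_sign (snd m) n * (if m'' = m then 1 else 0) else (0::'f))"
  proof (rule sum.cong[OF refl])
    fix s assume "s \<in> snd m"
    show "position_sign (snd m) s * Hcoef i p (Qreplace i p s m) m''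
        = (if s = n then position_sign (snd m) n * (if m'' = m then 1 else 0) else 0)"
    proof (cases "s = n")
      case True
      then have "liftable i p (Qreplace i p s m)" "lift i p (Qreplace i p s m) = m"
        using liftable_Qreplace_iff[OF assms(1) \<open>s \<in> snd m\<close>] lift_Qreplace_pivot[OF assms]
        by (simp_all add: n_def)
      then show ?thesis using True by (auto simp: Hcoef_def)
    next
      case False
      then have "\<not> liftable i p (Qreplace i p s m)"
        using liftable_Qreplace_iff[OF assms(1) \<open>s \<in> snd m\<close>] assms(2) by (simp add: n_def)
      then show ?thesis using False by (simp add: Hcoef_def)
    qed
  qed
  also have "\<dots> = (if m'' = m then 1 else 0)"
    using \<open>finite (snd m)\<close> assms pivot_le_exterior[OF assms(1)]
    by (simp add: position_sign_eq_1 n_def)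
  finally show ?thesis .
qed

lemma Qcoef_lift:
  assumes "is_Rmono m" "liftable i p m"
  shows "Qcoef i p (lift i p m) m'' = (if m'' = m then 1 else 0)
       - (\<Sum>s\<in>snd m. if m'' = Qreplace i p s (lift i p m) then position_sign (snd m) s else (0::'f::comm_ring_1))"
proof -
  define n where "n = pivot i p m"
  define S where "S = snd m"
  have "finite S" using assms(1) by (simp add: is_Rmono_def S_def)
  have "n \<notin> S" using assms(2) by (simp add: liftable_def n_def S_def)
  have n_less: "n < s" if "s \<in> S" for s
    using pivot_le_exterior[OF assms(1)] that \<open>n \<notin> S\<close> n_def S_def by (metis le_neq_implies_less)
  have snd_lift: "snd (lift i p m) = insert n S" by (simp add: lift_def n_def S_def)
  have Qreplace_n: "Qreplace i p n (lift i p m) = m"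
    using Qreplace_pivot_lift[OF assms(2)] by (simp add: n_def)
  have sign_n: "position_sign (insert n S) n = (1::'f)"
    using n_less by (intro position_sign_eq_1) (auto intro: less_imp_le)
  have sign_s: "position_sign (insert n S) s = - (position_sign S s :: 'f)" if "s \<in> S" for s
    using position_sign_insert_less[OF \<open>finite S\<close> \<open>n \<notin> S\<close> n_less[OF that]] .
  have "(Qcoef i p (lift i p m) m'' :: 'f)
      = (\<Sum>s\<in>insert n S. if m'' = Qreplace i p s (lift i p m) then position_sign (insert n S) s else 0)"
    unfolding Qcoef_eq snd_lift ..
  also have "\<dots> = (if m'' = m then 1 else 0)
      + (\<Sum>s\<in>S. if m'' = Qreplace i p s (lift i p m) then position_sign (insert n S) s else 0)"
    using \<open>finite S\<close> \<open>n \<notin> S\<close> by (simp add: Qreplace_n sign_n)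
  also have "(\<Sum>s\<in>S. if m'' = Qreplace i p s (lift i p m) then position_sign (insert n S) s else 0)
      = - (\<Sum>s\<in>S. if m'' = Qreplace i p s (lift i p m) then position_sign S s else (0::'f))"
    unfolding sum_negf[symmetric] by (rule sum.cong) (simp_all add: sign_s)
  finally show ?thesis by (simp add: S_def cong: if_cong)
qed

lemma contraction_identity_liftable:
  assumes "is_Rmono m" "liftable i p m"
  shows "Qcoef i p (lift i p m) m''
       + (\<Sum>s\<in>snd m. position_sign (snd m) s * Hcoef i p (Qreplace i p s m) m'')
       = (if m'' = m then 1 else (0::'f::comm_ring_1))"
proof -
  have "(\<Sum>s\<in>snd m. position_sign (snd m) s * Hcoef i p (Qreplace i p s m) m'')
      = (\<Sum>s\<in>snd m. if m'' = Qreplace i p s (lift i p m) then position_sign (snd m) s else (0::'f))"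
  proof (rule sum.cong[OF refl])
    fix s assume "s \<in> snd m"
    then have "liftable i p (Qreplace i p s m)"
      using liftable_Qreplace_iff[OF assms(1)] assms(2) by (simp add: liftable_def)
    then have "Hcoef i p (Qreplace i p s m) m'' = (if m'' = Qreplace i p s (lift i p m) then 1 else (0::'f))"
      using lift_Qreplace[OF assms \<open>s \<in> snd m\<close>] by (auto simp: Hcoef_def)
    then show "position_sign (snd m) s * Hcoef i p (Qreplace i p s m) m''
        = (if m'' = Qreplace i p s (lift i p m) then position_sign (snd m) s else (0::'f))" by simp
  qed
  then show ?thesis by (simp add: Qcoef_lift[OF assms])
qed

lemma contraction_identity:
  assumes "is_Rmono m"
  shows "(if liftable i p m then Qcoef i p (lift i p m) m'' else 0)
       + (\<Sum>s\<in>snd m. position_sign (snd m) s * Hcoef i p (Qreplace i p s m) m'')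
       = (if m'' = m \<and> active i p m \<noteq> {} then 1 else (0::'f::comm_ring_1))"
proof (cases "active i p m = {}")
  case True
  then have "snd m = {}" using exterior_subset_active[OF assms] by blast
  then show ?thesis using True by (simp add: liftable_def)
next
  case False
  show ?thesis
  proof (cases "pivot i p m \<in> snd m")
    case True
    then have "\<not> liftable i p m" by (simp add: liftable_def)
    then show ?thesis using False by (simp add: contraction_identity_pivot_exterior[OF assms True])
  next
    case False
    then have "liftable i p m" using \<open>active i p m \<noteq> {}\<close> by (simp add: liftable_def)
    then show ?thesis using \<open>active i p m \<noteq> {}\<close> by (simp add: contraction_identity_liftable[OF assms])
  qed
qed

section \<open>The square of $Q_i$ vanishes\<close>

lemma sum_offdiag_skew_eq_0:
  fixes f :: "'a \<Rightarrow> 'a \<Rightarrow> 'b::ab_group_add"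
  assumes "finite S" "\<And>s t. s \<in> S \<Longrightarrow> t \<in> S \<Longrightarrow> s \<noteq> t \<Longrightarrow> f t s = - f s t"
  shows "(\<Sum>s\<in>S. \<Sum>t\<in>S - {s}. f s t) = 0"
  using assms
proof (induction S rule: finite_induct)
  case (insert x S)
  have "(\<Sum>s\<in>insert x S. \<Sum>t\<in>insert x S - {s}. f s t)
      = (\<Sum>t\<in>S. f x t) + (\<Sum>s\<in>S. f s x + (\<Sum>t\<in>S - {s}. f s t))"
  proof -
    have "insert x S - {s} = insert x (S - {s})" if "s \<in> S" for s
      using that insert.hyps(2) by auto
    then show ?thesis using insert.hyps by (simp add: insert_Diff_if)
  qed
  also have "\<dots> = (\<Sum>t\<in>S. f x t + f t x) + (\<Sum>s\<in>S. \<Sum>t\<in>S - {s}. f s t)"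
    by (simp add: sum.distrib)
  also have "(\<Sum>t\<in>S. f x t + f t x) = 0"
  proof (rule sum.neutral, rule ballI)
    fix t assume "t \<in> S"
    then have "f t x = - f x t" using insert.prems[of x t] insert.hyps(2) by blast
    then show "f x t + f t x = 0" by simp
  qed
  moreover have "(\<Sum>s\<in>S. \<Sum>t\<in>S - {s}. f s t) = 0"
    by (intro insert.IH insert.prems) auto
  ultimately show ?case by simp
qed simp

lemma Qreplace_commute:
  assumes "is_Rmono m" "s \<in> snd m" "t \<in> snd m" "s \<noteq> t"
  shows "Qreplace i p s (Qreplace i p t m) = Qreplace i p t (Qreplace i p s m)"
proof -
  have "3 \<le> s" "3 \<le> t" using assms by (auto simp: is_Rmono_def)
  then have "zeta_index i s \<noteq> zeta_index i t"
    using assms(4) zeta_index_eq_iff[of s t i] by simp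
  then show ?thesis by (auto simp: Qreplace_def Qtarget_commute)
qed

lemma Qcoef_Qreplace_sum_eq_0:
  assumes "is_Rmono m"
  shows "(\<Sum>s\<in>snd m. position_sign (snd m) s * Qcoef i p (Qreplace i p s m) m'') = (0::'f::comm_ring_1)"
proof -
  define S where "S = snd m"
  define f :: "nat \<Rightarrow> nat \<Rightarrow> 'f" where "f s t =
    position_sign S s * (if m'' = Qreplace i p t (Qreplace i p s m) then position_sign (S - {s}) t else 0)"
    for s t
  have "finite S" using assms by (simp add: is_Rmono_def S_def)
  have "f t s = - f s t" if "s \<in> S" "t \<in> S" "s \<noteq> t" for s t
    using position_sign_swap[OF \<open>finite S\<close> that, where 'f = 'f] Qreplace_commute[OF assms, of s t i p] that
    by (simp add: f_def S_def)
  then have "(\<Sum>s\<in>S. \<Sum>t\<in>S - {s}. f s t) = 0" by (rule sum_offdiag_skew_eq_0[OF \<open>finite S\<close>])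
  moreover have "position_sign S s * Qcoef i p (Qreplace i p s m) m'' = (\<Sum>t\<in>S - {s}. f s t)" for s
  proof -
    have "snd (Qreplace i p s m) = S - {s}" by (simp add: Qreplace_def S_def)
    then show ?thesis unfolding Qcoef_eq f_def sum_distrib_left by (rule ssubst) (rule refl)
  qed
  ultimately show ?thesis by (simp add: S_def)
qed

section \<open>The monomial without pivot\<close>

lemma less_power_self: "2 \<le> p \<Longrightarrow> n < (p::nat) ^ n"
  using less_exp[of n] power_mono[of 2 p n] by linarith

lemma wt_ge_zeta_part: "is_Rmono m \<Longrightarrow> fst m n * p ^ n \<le> wt p m"
  unfolding wt_def is_Rmono_def by (cases "fst m n = 0") (auto intro!: trans_le_add1 member_le_sum)

lemma wt_ge_exterior_part: "is_Rmono m \<Longrightarrow> n \<in> snd m \<Longrightarrow> p ^ n \<le> wt p m"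
  unfolding wt_def is_Rmono_def by (auto intro!: trans_le_add2 member_le_sum)

lemma finite_W2basis:
  assumes "2 \<le> p"
  shows "finite (W2basis p k)"
proof -
  define W where "W = p ^ 2 * k"
  define F where "F = {e :: nat \<Rightarrow> nat. \<forall>n. (n \<in> {..W} \<longrightarrow> e n \<in> {..W}) \<and> (n \<notin> {..W} \<longrightarrow> e n = 0)}"
  have "W2basis p k \<subseteq> F \<times> Pow {..W}"
  proof
    fix m assume "m \<in> W2basis p k"
    then have R: "is_Rmono m" and wt: "wt p m = W" by (auto simp: W2basis_def W_def)
    have "fst m n \<le> W \<and> (W < n \<longrightarrow> fst m n = 0)" for n
    proof (cases "fst m n = 0")
      case False
      have "fst m n * p ^ n \<le> W" using wt_ge_zeta_part[OF R, of n p] wt by simp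
      moreover have "fst m n \<le> fst m n * p ^ n" using \<open>2 \<le> p\<close> by simp
      moreover have "p ^ n \<le> fst m n * p ^ n" using False by simp
      moreover have "n < p ^ n" using less_power_self[OF \<open>2 \<le> p\<close>] .
      ultimately show ?thesis by linarith
    qed simp
    moreover have "snd m \<subseteq> {..W}"
    proof
      fix n assume "n \<in> snd m"
      then have "p ^ n \<le> W" using wt_ge_exterior_part[OF R] wt by metis
      then show "n \<in> {..W}" using less_power_self[OF \<open>2 \<le> p\<close>, of n] by simp
    qed
    ultimately show "m \<in> F \<times> Pow {..W}" by (cases m) (auto simp: F_def not_le)
  qed
  moreover have "finite F" unfolding F_def by (rule finite_set_of_finite_funs) auto
  ultimately show ?thesis by (rule finite_subset[OF _ finite_cartesian_product]) simp
qed

lemma sum_digits_eq_mod: "(\<Sum>j<N. (k div p ^ j mod p) * p ^ j) = k mod p ^ N" for k p :: nat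
proof (induction N)
  case (Suc N)
  have "k mod (p ^ N * p) = p ^ N * (k div p ^ N mod p) + k mod p ^ N" by (rule mod_mult2_eq)
  then have "k mod p ^ Suc N = p ^ N * (k div p ^ N mod p) + k mod p ^ N" by (simp only: power_Suc2)
  then show ?case using Suc by (simp add: mult.commute)
qed simp

lemma sum_power_Suc_shift: "(\<Sum>j<Suc N. f j * p ^ j) = f 0 + p * (\<Sum>j<N. f (Suc j) * p ^ j)"
  for f :: "nat \<Rightarrow> nat"
  by (subst sum.lessThan_Suc_shift) (simp add: sum_distrib_left algebra_simps)

lemma digit_of_sum_digits:
  fixes f :: "nat \<Rightarrow> nat"
  assumes "\<forall>j. f j < p" "j < N"
  shows "(\<Sum>i<N. f i * p ^ i) div p ^ j mod p = f j"
  using assms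
proof (induction j arbitrary: f N)
  case 0
  then obtain N' where N: "N = Suc N'" by (cases N) auto
  have "f 0 < p" using 0 by simp
  then show ?case unfolding N sum_power_Suc_shift by simp
next
  case (Suc j)
  then obtain N' where N: "N = Suc N'" by (cases N) auto
  have "f 0 < p" using Suc.prems by simp
  have "(\<Sum>i<N. f i * p ^ i) div p ^ Suc j = (f 0 + p * (\<Sum>i<N'. f (Suc i) * p ^ i)) div p div p ^ j"
    unfolding N sum_power_Suc_shift by (simp add: div_mult2_eq)
  also have "(f 0 + p * (\<Sum>i<N'. f (Suc i) * p ^ i)) div p = (\<Sum>i<N'. f (Suc i) * p ^ i)"
    using \<open>f 0 < p\<close> by simp
  finally have "(\<Sum>i<N. f i * p ^ i) div p ^ Suc j = (\<Sum>i<N'. f (Suc i) * p ^ i) div p ^ j" .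
  moreover have "(\<Sum>i<N'. f (Suc i) * p ^ i) div p ^ j mod p = f (Suc j)"
    using Suc.prems N by (intro Suc.IH) auto
  ultimately show ?case by simp
qed

lemma wt_zeta_monomial:
  assumes "e 0 = 0" "e 1 = 0" "{n. e n \<noteq> 0} \<subseteq> {..<N + 2}"
  shows "wt p (e, {}) = p ^ 2 * (\<Sum>j<N. e (j + 2) * p ^ j)"
proof -
  have "wt p (e, {}) = (\<Sum>n<Suc (Suc N). e n * p ^ n)"
    using wt_eq_sum_superset[of "{..<N + 2}" "(e, {})" p] assms(3) by simp
  also have "\<dots> = p ^ 2 * (\<Sum>j<N. e (j + 2) * p ^ j)"
    unfolding sum_power_Suc_shift using assms(1,2) by (simp add: power2_eq_square)
  finally show ?thesis .
qed

lemma active_empty_iff: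
  assumes "is_Rmono m"
  shows "active i p m = {} \<longleftrightarrow> snd m = {} \<and> (\<forall>s\<ge>3. fst m (zeta_index i s) < zeta_power i p)"
proof
  assume empty: "active i p m = {}"
  then have "snd m = {}" using exterior_subset_active[OF assms, of i p] by blast
  moreover have "fst m (zeta_index i s) < zeta_power i p" if "3 \<le> s" for s
  proof -
    have "s \<notin> active i p m" using empty by blast
    then show ?thesis using that by (simp add: active_def not_le)
  qed
  ultimately show "snd m = {} \<and> (\<forall>s\<ge>3. fst m (zeta_index i s) < zeta_power i p)" by blast
qed (auto simp: active_def)

definition base_mono :: "nat \<Rightarrow> nat \<Rightarrow> nat \<Rightarrow> mono" where
  "base_mono i p k = (if i = 0 then ((\<lambda>n. if n = 2 then k else 0), {})
     else ((\<lambda>n. if 2 \<le> n then k div p ^ (n - 2) mod p else 0), {}))"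

lemma base_mono_0:
  "base_mono 0 p k \<in> W2basis p k \<and> active 0 p (base_mono 0 p k) = {}"
proof -
  define e where "e = (\<lambda>n::nat. if n = 2 then k else 0)"
  have "wt p (e, {}) = p ^ 2 * (\<Sum>j<1. e (j + 2) * p ^ j)"
    by (rule wt_zeta_monomial) (auto simp: e_def)
  then have "wt p (e, {}) = p ^ 2 * k" by (simp add: e_def)
  moreover have "is_Rmono (e, {})" by (auto simp: is_Rmono_def e_def)
  ultimately show ?thesis
    by (auto simp: base_mono_def W2basis_def active_def zeta_index_def zeta_power_def e_def)
qed

lemma base_mono_1:
  assumes "2 \<le> p"
  shows "base_mono 1 p k \<in> W2basis p k \<and> active 1 p (base_mono 1 p k) = {}"
proof -
  define e where "e = (\<lambda>n::nat. if 2 \<le> n then k div p ^ (n - 2) mod p else 0)"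
  have "n < k + 2" if "e n \<noteq> 0" for n
  proof (rule ccontr)
    assume "\<not> n < k + 2"
    then have "p ^ k \<le> p ^ (n - 2)" using assms by (intro power_increasing) auto
    then have "k < p ^ (n - 2)" using less_power_self[OF assms, of k] by simp
    then show False using that \<open>\<not> n < k + 2\<close> by (simp add: e_def)
  qed
  then have "{n. e n \<noteq> 0} \<subseteq> {..<k + 2}" by auto
  then have "wt p (e, {}) = p ^ 2 * (\<Sum>j<k. e (j + 2) * p ^ j)"
    by (rule wt_zeta_monomial[rotated 2]) (simp_all add: e_def)
  then have wt_e: "wt p (e, {}) = p ^ 2 * (\<Sum>j<k. (k div p ^ j mod p) * p ^ j)" by (simp add: e_def)
  have "finite {n. e n \<noteq> 0}"
    using finite_subset[OF \<open>{n. e n \<noteq> 0} \<subseteq> {..<k + 2}\<close>] by simp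
  moreover have "\<forall>n<2. e n = 0" by (simp add: e_def)
  ultimately have "is_Rmono (e, {})" by (simp add: is_Rmono_def)
  moreover have "(\<Sum>j<k. (k div p ^ j mod p) * p ^ j) = k"
    using sum_digits_eq_mod[of k p k] less_power_self[OF assms, of k] by simp
  ultimately have "(e, {}) \<in> W2basis p k" using wt_e by (simp add: W2basis_def)
  moreover have "s \<notin> active 1 p (e, {})" for s
  proof -
    have "e (zeta_index 1 s) < p" using assms by (simp add: e_def)
    then show ?thesis by (simp add: active_def zeta_power_def)
  qed
  ultimately show ?thesis by (auto simp: base_mono_def e_def)
qed

lemma base_mono_0_unique:
  assumes "m \<in> W2basis p k" "active 0 p m = {}" "2 \<le> p"
  shows "m = base_mono 0 p k"
proof -
  have R: "is_Rmono m" and wt: "wt p m = p ^ 2 * k" using assms(1) by (auto simp: W2basis_def)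
  have "snd m = {}" "\<forall>s\<ge>3. fst m (zeta_index 0 s) < zeta_power 0 p"
    using assms(2) active_empty_iff[OF R, of 0 p] by blast+
  moreover obtain e S where m: "m = (e, S)" by (cases m)
  ultimately have "S = {}" "\<forall>s\<ge>3. e s = 0" by (simp_all add: zeta_index_def zeta_power_def)
  have "e 0 = 0" "e 1 = 0" using R by (simp_all add: m is_Rmono_def)
  have e: "e n = 0" if "n \<noteq> 2" for n
  proof -
    have "n = 0 \<or> n = 1 \<or> 3 \<le> n" using that by presburger
    then show ?thesis using \<open>e 0 = 0\<close> \<open>e 1 = 0\<close> \<open>\<forall>s\<ge>3. e s = 0\<close> by auto
  qed
  have "{n. e n \<noteq> 0} \<subseteq> {..<1 + 2}"
  proof
    fix n assume "n \<in> {n. e n \<noteq> 0}"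
    then show "n \<in> {..<1 + 2}" using e[of n] by (cases "n = 2") auto
  qed
  then have "wt p m = p ^ 2 * (\<Sum>j<1. e (j + 2) * p ^ j)"
    unfolding m \<open>S = {}\<close> by (rule wt_zeta_monomial[OF \<open>e 0 = 0\<close> \<open>e 1 = 0\<close>])
  then have "e 2 = k" using wt assms(3) by (simp add: numeral_2_eq_2)
  have "e = (\<lambda>n. if n = 2 then k else 0)"
  proof
    fix n show "e n = (if n = 2 then k else 0)" using e \<open>e 2 = k\<close> by (cases "n = 2") simp_all
  qed
  then show ?thesis by (simp add: m \<open>S = {}\<close> base_mono_def)
qed

lemma base_mono_1_unique:
  assumes "m \<in> W2basis p k" "active 1 p m = {}" "2 \<le> p"
  shows "m = base_mono 1 p k"
proof -
  have R: "is_Rmono m" and wt: "wt p m = p ^ 2 * k" using assms(1) by (auto simp: W2basis_def)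
  have "snd m = {}" "\<forall>s\<ge>3. fst m (zeta_index 1 s) < zeta_power 1 p"
    using assms(2) active_empty_iff[OF R, of 1 p] by blast+
  moreover obtain e S where m: "m = (e, S)" by (cases m)
  ultimately have "S = {}" "\<forall>s\<ge>3. e (s - 1) < p" by (simp_all add: zeta_index_def zeta_power_def)
  have "e 0 = 0" "e 1 = 0" using R by (simp_all add: m is_Rmono_def)
  have digit: "e (j + 2) < p" for j
    using spec[OF \<open>\<forall>s\<ge>3. e (s - 1) < p\<close>, of "j + 3"] by simp
  have "finite {n. e n \<noteq> 0}" using R by (simp add: m is_Rmono_def)
  then obtain N where N: "{n. e n \<noteq> 0} \<subseteq> {..<N}" using finite_nat_bounded by blast
  have "e n = k div p ^ (n - 2) mod p" if "2 \<le> n" for n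
  proof -
    have "{n. e n \<noteq> 0} \<subseteq> {..<(N + n) + 2}" using N by auto
    then have "p ^ 2 * (\<Sum>j<N + n. e (j + 2) * p ^ j) = p ^ 2 * k"
      using wt wt_zeta_monomial[OF \<open>e 0 = 0\<close> \<open>e 1 = 0\<close>] by (simp add: m \<open>S = {}\<close>)
    then have "(\<Sum>j<N + n. e (j + 2) * p ^ j) = k" using assms(3) by simp
    moreover have "n - 2 < N + n" using that by linarith
    moreover have "n - 2 + 2 = n" using that by simp
    ultimately show ?thesis
      using digit_of_sum_digits[of "\<lambda>j. e (j + 2)" p "n - 2" "N + n"] digit by simp
  qed
  then have "e = (\<lambda>n. if 2 \<le> n then k div p ^ (n - 2) mod p else 0)"
    using \<open>e 0 = 0\<close> \<open>e 1 = 0\<close> by (auto simp: fun_eq_iff not_le less_2_cases_iff)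
  then show ?thesis by (simp add: m \<open>S = {}\<close> base_mono_def)
qed

lemma base_mono_iff:
  assumes "i \<le> 1" "2 \<le> p"
  shows "m \<in> W2basis p k \<and> active i p m = {} \<longleftrightarrow> m = base_mono i p k"
proof (cases "i = 0")
  case True
  then show ?thesis using base_mono_0[of p k] base_mono_0_unique[of m p k] assms(2) by auto
next
  case False
  then have "i = 1" using assms(1) by simp
  then show ?thesis using base_mono_1[OF assms(2), of k] base_mono_1_unique[of m p k] assms(2) by auto
qed

section \<open>Margolis homology\<close>

context vector_space
begin

lemma dim_insert_not_in_span:
  assumes "x \<notin> span S" "finite W" "S \<subseteq> span W"
  shows "dim (insert x S) = dim S + 1"
proof -
  obtain B where B: "B \<subseteq> S" "independent B" "S \<subseteq> span B" "card B = dim S"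
    by (rule basis_exists)
  have "finite B" using independent_span_bound[OF assms(2) B(2)] B(1) assms(3) by blast
  have "span B = span S" using B(1,3) span_mono span_span by (metis subset_antisym)
  then have "x \<notin> span B" using assms(1) by simp
  then have "independent (insert x B)" "x \<notin> B" using independent_insertI[OF _ B(2)] span_base by auto
  moreover have "span (insert x B) = span (insert x S)"
    using \<open>span B = span S\<close> by (simp add: span_insert)
  ultimately have "dim (insert x S) = card (insert x B)" using dim_eq_card by metis
  then show ?thesis using \<open>finite B\<close> \<open>x \<notin> B\<close> B(4) by simp
qed

lemma dim_eq_plus_1_of_span_insert:
  assumes "I \<subseteq> K" "x \<in> K" "K \<subseteq> span (insert x I)" "x \<notin> span I" "finite W" "I \<subseteq> span W"
  shows "dim K = dim I + 1"
proof -
  have "span K = span (insert x I)"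
    using assms(1-3) span_mono span_span by (metis insert_subset subset_antisym)
  then show ?thesis using dim_insert_not_in_span[OF assms(4-6)] span_eq_dim by metis
qed

end

lemma vector_space_fscale: "vector_space (fscale :: 'f::field \<Rightarrow> (mono \<Rightarrow> 'f) \<Rightarrow> (mono \<Rightarrow> 'f))"
  by unfold_locales (simp_all add: fscale_def fun_eq_iff algebra_simps)

lemma sum_matrix_mult_assoc:
  fixes v :: "'a \<Rightarrow> 'b::semiring_0"
  assumes "finite B"
  shows "(\<Sum>m'\<in>B. (\<Sum>m\<in>B. v m * X m m') * Y m') = (\<Sum>m\<in>B. v m * (\<Sum>m'\<in>B. X m m' * Y m'))"
proof -
  have "(\<Sum>m'\<in>B. (\<Sum>m\<in>B. v m * X m m') * Y m') = (\<Sum>m'\<in>B. \<Sum>m\<in>B. v m * (X m m' * Y m'))"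
    by (simp add: sum_distrib_right mult.assoc)
  also have "\<dots> = (\<Sum>m\<in>B. \<Sum>m'\<in>B. v m * (X m m' * Y m'))" by (rule sum.swap)
  finally show ?thesis by (simp add: sum_distrib_left)
qed

lemma Qcoef_sum_W2basis:
  assumes "finite (W2basis p k)" "m \<in> W2basis p k"
  shows "(\<Sum>m'\<in>W2basis p k. Qcoef i p m m' * \<phi> m')
       = (\<Sum>s\<in>snd m. position_sign (snd m) s * (\<phi> (Qreplace i p s m) :: 'f::comm_ring_1))"
proof -
  let ?t = "\<lambda>s m'. if m' = Qreplace i p s m then position_sign (snd m) s * \<phi> (Qreplace i p s m) else (0::'f)"
  have "(\<Sum>m'\<in>W2basis p k. Qcoef i p m m' * \<phi> m') = (\<Sum>m'\<in>W2basis p k. \<Sum>s\<in>snd m. ?t s m')"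
    unfolding Qcoef_eq sum_distrib_right by (intro sum.cong refl) simp
  also have "\<dots> = (\<Sum>s\<in>snd m. \<Sum>m'\<in>W2basis p k. ?t s m')" by (rule sum.swap)
  also have "\<dots> = (\<Sum>s\<in>snd m. position_sign (snd m) s * \<phi> (Qreplace i p s m))"
    using assms Qreplace_in_W2basis by (intro sum.cong refl) simp
  finally show ?thesis .
qed

lemma Hcoef_sum_W2basis:
  assumes "finite (W2basis p k)" "m \<in> W2basis p k"
  shows "(\<Sum>m'\<in>W2basis p k. Hcoef i p m m' * \<phi> m')
       = (if liftable i p m then \<phi> (lift i p m) else (0::'f::comm_ring_1))"
proof (cases "liftable i p m")
  case True
  then have "(\<Sum>m'\<in>W2basis p k. Hcoef i p m m' * \<phi> m')
      = (\<Sum>m'\<in>W2basis p k. if lift i p m = m' then \<phi> m' else 0)"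
    by (intro sum.cong refl) (simp add: Hcoef_def)
  then show ?thesis using True assms lift_in_W2basis by simp
qed (simp add: Hcoef_def)

definition Hmap :: "nat \<Rightarrow> nat \<Rightarrow> nat \<Rightarrow> (mono \<Rightarrow> 'f::field) \<Rightarrow> (mono \<Rightarrow> 'f)" where
  "Hmap i p k v = (\<lambda>m'. \<Sum>m\<in>W2basis p k. v m * Hcoef i p m m')"

definition basis_vec :: "mono \<Rightarrow> mono \<Rightarrow> 'f::field" where
  "basis_vec m = (\<lambda>m'. if m' = m then 1 else 0)"

lemma matrix_image_in_Wspace:
  assumes "\<And>m m'. m \<in> W2basis p k \<Longrightarrow> C m m' \<noteq> 0 \<Longrightarrow> m' \<in> W2basis p k"
  shows "(\<lambda>m'. \<Sum>m\<in>W2basis p k. v m * C m m') \<in> Wspace p k"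
  unfolding Wspace_def
proof (intro CollectI allI impI)
  fix m' assume "(\<lambda>m'. \<Sum>m\<in>W2basis p k. v m * C m m') m' \<noteq> 0"
  then have "(\<Sum>m\<in>W2basis p k. v m * C m m') \<noteq> 0" by simp
  then obtain m where "m \<in> W2basis p k" "v m * C m m' \<noteq> 0"
    by (meson sum.not_neutral_contains_not_neutral)
  then have "m \<in> W2basis p k" "C m m' \<noteq> 0" by auto
  then show "m' \<in> W2basis p k" by (rule assms)
qed

lemma Qmap_in_Wspace: "Qmap i p k v \<in> Wspace p k"
  unfolding Qmap_def
proof (rule matrix_image_in_Wspace)
  fix m m' assume m: "m \<in> W2basis p k" and nz: "Qcoef i p m m' \<noteq> 0"
  show "m' \<in> W2basis p k"
  proof (rule ccontr)
    assume "m' \<notin> W2basis p k"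
    then have "m' \<noteq> Qreplace i p s m" if "s \<in> snd m" for s
      using Qreplace_in_W2basis[OF m that] by blast
    then have "Qcoef i p m m' = 0" unfolding Qcoef_eq by (intro sum.neutral) auto
    with nz show False by contradiction
  qed
qed

lemma Hmap_in_Wspace: "Hmap i p k v \<in> Wspace p k"
  unfolding Hmap_def
proof (rule matrix_image_in_Wspace)
  fix m m' assume m: "m \<in> W2basis p k" and "Hcoef i p m m' \<noteq> 0"
  then have "liftable i p m" "m' = lift i p m" by (auto simp: Hcoef_def split: if_splits)
  then show "m' \<in> W2basis p k" using lift_in_W2basis[OF m] by simp
qed

lemma Hmap_zero [simp]: "Hmap i p k 0 = 0"
  by (simp add: Hmap_def fun_eq_iff)

lemma Qmap_Qmap:
  fixes v :: "mono \<Rightarrow> 'f::field"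
  assumes "2 \<le> p"
  shows "Qmap i p k (Qmap i p k v) = 0"
proof
  fix m''
  have fin: "finite (W2basis p k)" using finite_W2basis[OF assms] .
  have "Qmap i p k (Qmap i p k v) m''
      = (\<Sum>m\<in>W2basis p k. v m * (\<Sum>m'\<in>W2basis p k. Qcoef i p m m' * Qcoef i p m' m''))"
    unfolding Qmap_def by (rule sum_matrix_mult_assoc[OF fin])
  also have "\<dots> = 0"
  proof (rule sum.neutral, rule ballI)
    fix m assume m: "m \<in> W2basis p k"
    then have "is_Rmono m" by (simp add: W2basis_def)
    have "(\<Sum>m'\<in>W2basis p k. Qcoef i p m m' * Qcoef i p m' m'') = (0::'f)"
      unfolding Qcoef_sum_W2basis[OF fin m] by (rule Qcoef_Qreplace_sum_eq_0[OF \<open>is_Rmono m\<close>])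
    then show "v m * (\<Sum>m'\<in>W2basis p k. Qcoef i p m m' * Qcoef i p m' m'') = 0" by simp
  qed
  finally show "Qmap i p k (Qmap i p k v) m'' = 0 m''" by simp
qed

lemma base_mono_in_W2basis: "i \<le> 1 \<Longrightarrow> 2 \<le> p \<Longrightarrow> base_mono i p k \<in> W2basis p k"
  using base_mono_iff by blast

lemma active_base_mono: "i \<le> 1 \<Longrightarrow> 2 \<le> p \<Longrightarrow> active i p (base_mono i p k) = {}"
  using base_mono_iff by blast

lemma Qmap_Hmap_add_Hmap_Qmap:
  fixes v :: "mono \<Rightarrow> 'f::field"
  assumes "i \<le> 1" "2 \<le> p" "v \<in> Wspace p k"
  shows "Qmap i p k (Hmap i p k v) + Hmap i p k (Qmap i p k v)
       = v - fscale (v (base_mono i p k)) (basis_vec (base_mono i p k))"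
proof
  fix m''
  let ?B = "W2basis p k" and ?b = "base_mono i p k"
  have fin: "finite ?B" using finite_W2basis[OF assms(2)] .
  have "(Qmap i p k (Hmap i p k v) + Hmap i p k (Qmap i p k v)) m''
      = (\<Sum>m\<in>?B. v m * ((\<Sum>m'\<in>?B. Hcoef i p m m' * Qcoef i p m' m'')
                         + (\<Sum>m'\<in>?B. Qcoef i p m m' * Hcoef i p m' m'')))"
    unfolding Qmap_def Hmap_def plus_fun_def sum_matrix_mult_assoc[OF fin]
    by (simp add: distrib_left sum.distrib)
  also have "\<dots> = (\<Sum>m\<in>?B. if m = m'' then (if active i p m'' \<noteq> {} then v m'' else 0) else 0)"
  proof (rule sum.cong[OF refl])
    fix m assume m: "m \<in> ?B"
    then have "(\<Sum>m'\<in>?B. Hcoef i p m m' * Qcoef i p m' m'') + (\<Sum>m'\<in>?B. Qcoef i p m m' * Hcoef i p m' m'')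
        = (if m'' = m \<and> active i p m \<noteq> {} then 1 else (0::'f))"
      unfolding Hcoef_sum_W2basis[OF fin m] Qcoef_sum_W2basis[OF fin m]
      by (intro contraction_identity) (simp add: W2basis_def)
    then show "v m * ((\<Sum>m'\<in>?B. Hcoef i p m m' * Qcoef i p m' m'') + (\<Sum>m'\<in>?B. Qcoef i p m m' * Hcoef i p m' m''))
        = (if m = m'' then (if active i p m'' \<noteq> {} then v m'' else 0) else 0)" by auto
  qed
  also have "\<dots> = (v - fscale (v ?b) (basis_vec ?b)) m''"
  proof (cases "m'' \<in> ?B")
    case True
    then have "active i p m'' = {} \<longleftrightarrow> m'' = ?b" using base_mono_iff[OF assms(1,2)] by blast
    then show ?thesis using True fin by (simp add: fscale_def basis_vec_def)
  next
    case False
    then have "v m'' = 0" "m'' \<noteq> ?b"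
      using assms(3) base_mono_in_W2basis[OF assms(1,2)] unfolding Wspace_def by blast+
    then show ?thesis using False fin by (simp add: fscale_def basis_vec_def)
  qed
  finally show "(Qmap i p k (Hmap i p k v) + Hmap i p k (Qmap i p k v)) m''
      = (v - fscale (v ?b) (basis_vec ?b)) m''" .
qed

lemma Qmap_basis_vec_base_mono:
  assumes "i \<le> 1" "2 \<le> p"
  shows "Qmap i p k (basis_vec (base_mono i p k) :: mono \<Rightarrow> 'f::field) = 0"
proof
  fix m''
  let ?b = "base_mono i p k"
  have "Qmap i p k (basis_vec ?b :: mono \<Rightarrow> 'f) m'' = (\<Sum>m\<in>W2basis p k. if m = ?b then Qcoef i p m m'' else 0)"
    unfolding Qmap_def basis_vec_def by (intro sum.cong refl) simp
  also have "\<dots> = Qcoef i p ?b m''"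
    using finite_W2basis[OF assms(2)] base_mono_in_W2basis[OF assms] by simp
  also have "\<dots> = 0" by (simp add: Qcoef_eq base_mono_def)
  finally show "Qmap i p k (basis_vec ?b :: mono \<Rightarrow> 'f) m'' = 0 m''" by simp
qed

lemma Qmap_at_base_mono:
  assumes "i \<le> 1" "2 \<le> p"
  shows "Qmap i p k (v :: mono \<Rightarrow> 'f::field) (base_mono i p k) = 0"
proof -
  have "base_mono i p k \<noteq> Qreplace i p s m" if "m \<in> W2basis p k" "s \<in> snd m" for m s
  proof
    assume "base_mono i p k = Qreplace i p s m"
    moreover have "3 \<le> s" using that by (auto simp: W2basis_def is_Rmono_def)
    ultimately have "s \<in> active i p (base_mono i p k)" by (simp add: active_def Qreplace_def Qtarget_eq)
    then show False using active_base_mono[OF assms] by blast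
  qed
  then have "Qcoef i p m (base_mono i p k) = (0::'f)" if "m \<in> W2basis p k" for m
    using that unfolding Qcoef_eq by (intro sum.neutral) auto
  then show ?thesis by (simp add: Qmap_def)
qed

lemma sum_fun_apply: "(\<Sum>a\<in>A. f a) x = (\<Sum>a\<in>A. f a x)"
  by (induction A rule: infinite_finite_induct) simp_all

lemma Wspace_subset_span_basis_vec:
  assumes "2 \<le> p"
  shows "Wspace p k \<subseteq> module.span fscale (basis_vec ` W2basis p k :: (mono \<Rightarrow> 'f::field) set)"
proof
  interpret vector_space "fscale :: 'f \<Rightarrow> (mono \<Rightarrow> 'f) \<Rightarrow> _" by (rule vector_space_fscale)
  fix v :: "mono \<Rightarrow> 'f" assume v: "v \<in> Wspace p k"
  have "v = (\<Sum>m\<in>W2basis p k. fscale (v m) (basis_vec m))"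
  proof
    fix m'
    have "(\<Sum>m\<in>W2basis p k. fscale (v m) (basis_vec m)) m' = (\<Sum>m\<in>W2basis p k. if m = m' then v m' else 0)"
      unfolding sum_fun_apply by (intro sum.cong refl) (auto simp: fscale_def basis_vec_def)
    also have "\<dots> = v m'"
    proof (cases "m' \<in> W2basis p k")
      case False
      then have "v m' = 0" using v unfolding Wspace_def by blast
      then show ?thesis using False finite_W2basis[OF assms] by simp
    qed (simp add: finite_W2basis[OF assms])
    finally show "v m' = (\<Sum>m\<in>W2basis p k. fscale (v m) (basis_vec m)) m'" ..
  qed
  also have "\<dots> \<in> span (basis_vec ` W2basis p k)"
    by (intro span_sum span_scale span_base) simp
  finally show "v \<in> span (basis_vec ` W2basis p k)" .
qed

lemma margolis_dim_eq_1:
  assumes "i \<le> 1" "2 \<le> p"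
  shows "margolis_dim TYPE('f::field) i p k = 1"
proof -
  interpret vector_space "fscale :: 'f \<Rightarrow> (mono \<Rightarrow> 'f) \<Rightarrow> _" by (rule vector_space_fscale)
  define cycles where "cycles = {v \<in> (Wspace p k :: (mono \<Rightarrow> 'f) set). Qmap i p k v = 0}"
  define boundaries where "boundaries = Qmap i p k ` (Wspace p k :: (mono \<Rightarrow> 'f) set)"
  define base :: "mono \<Rightarrow> 'f" where "base = basis_vec (base_mono i p k)"
  have "boundaries \<subseteq> cycles" using Qmap_in_Wspace Qmap_Qmap[OF assms(2)] by (auto simp: boundaries_def cycles_def)
  moreover have "base \<in> cycles"
    using base_mono_in_W2basis[OF assms] Qmap_basis_vec_base_mono[OF assms]
    by (auto simp: cycles_def base_def Wspace_def basis_vec_def)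
  moreover have "cycles \<subseteq> span (insert base boundaries)"
  proof
    fix v assume "v \<in> cycles"
    then have "v \<in> Wspace p k" "Qmap i p k v = 0" by (simp_all add: cycles_def)
    then have "Qmap i p k (Hmap i p k v) = v - fscale (v (base_mono i p k)) base"
      using Qmap_Hmap_add_Hmap_Qmap[OF assms \<open>v \<in> Wspace p k\<close>] by (simp add: base_def)
    then have "v = Qmap i p k (Hmap i p k v) + fscale (v (base_mono i p k)) base" by simp
    moreover have "Qmap i p k (Hmap i p k v) \<in> span (insert base boundaries)"
      unfolding boundaries_def by (intro span_base insertI2 imageI Hmap_in_Wspace)
    moreover have "fscale (v (base_mono i p k)) base \<in> span (insert base boundaries)"
      by (intro span_scale span_base) simp
    ultimately show "v \<in> span (insert base boundaries)" using span_add by metis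
  qed
  moreover have "base \<notin> span boundaries"
  proof
    assume "base \<in> span boundaries"
    moreover have "subspace {x :: mono \<Rightarrow> 'f. x (base_mono i p k) = 0}"
      by (simp add: subspace_def fscale_def)
    moreover have "boundaries \<subseteq> {x. x (base_mono i p k) = 0}" using Qmap_at_base_mono[OF assms] by (auto simp: boundaries_def)
    ultimately have "base (base_mono i p k) = 0" using span_minimal by blast
    then show False by (simp add: base_def basis_vec_def)
  qed
  moreover have "finite (basis_vec ` W2basis p k :: (mono \<Rightarrow> 'f) set)"
    using finite_W2basis[OF assms(2)] by simp
  moreover have "boundaries \<subseteq> span (basis_vec ` W2basis p k)"
  proof -
    have "boundaries \<subseteq> Wspace p k" using Qmap_in_Wspace by (auto simp: boundaries_def)
    then show ?thesis using Wspace_subset_span_basis_vec[OF assms(2)] by (rule subset_trans)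
  qed
  ultimately have "dim cycles = dim boundaries + 1" by (rule dim_eq_plus_1_of_span_insert)
  then show ?thesis by (simp add: margolis_dim_def cycles_def boundaries_def)
qed

theorem mainTheorem7:
  fixes k :: nat
  assumes "odd CARD('p::prime_card)"
  shows "margolis_dim TYPE('p mod_ring) 0 CARD('p) k = 1
       \<and> margolis_dim TYPE('p mod_ring) 1 CARD('p) k = 1"
proof -
  \<comment> \<open>The computation works over any field.\<close>
  have "2 \<le> CARD('p)" using prime_card prime_ge_2_nat by blast
  then show ?thesis by (simp add: margolis_dim_eq_1)
qed

end
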